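(* Let $\Gamma_M$ ($M>0$) be a family of nonatomic routing games with a single OD pair with demand $M$, sharing the same graph, path set $\mathcal P$ and edge costs $(c_e)_{e\in\mathcal E}$. Suppose there exists a path $p\in\mathcal P$ with bounded costs, i.e. $\lim_{x\to\infty}c_e(x)<\infty$ for all $e\in p$. Then $\mathrm{PoA}(\Gamma_M)\to 1$ as $M\to\infty$.
   Context: A nonatomic routing game with a single OD pair consists of a finite directed multigraph with edge set $\mathcal E$, a nonempty finite set $\mathcal P$ of paths from an origin to a destination, a demand $M>0$, and continuous nondecreasing edge costs $c_e:[0,\infty)\to[0,\infty)$. Feasible flows: $f\in\mathbb R_+^{\mathcal P}$ with $\sum_p f_p=M$; loads $x_e=\sum_{p\ni e}f_p$; path costs $c_p(f)=\sum_{e\in p}c_e(x_e)$. A Wardrop equilibrium is a feasible $f^*$ with $c_p(f^* )\le c_{p'}(f^* )$ whenever $f^*_p>0$. Social cost $L(x)=\sum_e x_ec_e(x_e)$; $\mathrm{Opt}$ is its minimum over feasible loads, $\mathrm{Eq}=L(x^* )$ at an equilibrium load, and $\mathrm{PoA}=\mathrm{Eq}/\mathrm{Opt}$; it is assumed throughout that $\mathrm{Opt}>0$ (otherwise $\mathrm{PoA}:=1$). *)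

theory Defs
  imports "HOL-Analysis.Analysis"
begin

text \<open>Finite directed multigraph: edges of a finite type 'e, each edge e goes from
  tl_of e to hd_of e.\<close>

definition path_vertices :: "('e \<Rightarrow> 'v) \<Rightarrow> ('e \<Rightarrow> 'v) \<Rightarrow> 'e list \<Rightarrow> 'v list" where
  "path_vertices tl_of hd_of p = map tl_of p @ [hd_of (last p)]"

definition is_od_path :: "('e \<Rightarrow> 'v) \<Rightarrow> ('e \<Rightarrow> 'v) \<Rightarrow> 'v \<Rightarrow> 'v \<Rightarrow> 'e list \<Rightarrow> bool" where
  "is_od_path tl_of hd_of orig dest p \<longleftrightarrow>
     p \<noteq> [] \<and> tl_of (hd p) = orig \<and> hd_of (last p) = dest \<and>
     (\<forall>i. Suc i < length p \<longrightarrow> hd_of (p ! i) = tl_of (p ! Suc i)) \<and>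
     distinct (path_vertices tl_of hd_of p)"

definition feasible_flows :: "'e list set \<Rightarrow> real \<Rightarrow> ('e list \<Rightarrow> real) set" where
  "feasible_flows P M = {f. (\<forall>p. p \<notin> P \<longrightarrow> f p = 0) \<and> (\<forall>p\<in>P. 0 \<le> f p) \<and> (\<Sum>p\<in>P. f p) = M}"

definition edge_load :: "'e list set \<Rightarrow> ('e list \<Rightarrow> real) \<Rightarrow> 'e \<Rightarrow> real" where
  "edge_load P f e = (\<Sum>p\<in>{p\<in>P. e \<in> set p}. f p)"

definition path_cost :: "('e \<Rightarrow> real \<Rightarrow> real) \<Rightarrow> 'e list set \<Rightarrow> ('e list \<Rightarrow> real) \<Rightarrow> 'e list \<Rightarrow> real" where
  "path_cost c P f p = (\<Sum>e\<in>set p. c e (edge_load P f e))"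

definition wardrop_eq :: "('e \<Rightarrow> real \<Rightarrow> real) \<Rightarrow> 'e list set \<Rightarrow> real \<Rightarrow> ('e list \<Rightarrow> real) \<Rightarrow> bool" where
  "wardrop_eq c P M f \<longleftrightarrow> f \<in> feasible_flows P M \<and>
     (\<forall>p\<in>P. \<forall>q\<in>P. 0 < f p \<longrightarrow> path_cost c P f p \<le> path_cost c P f q)"

definition social_cost :: "('e::finite \<Rightarrow> real \<Rightarrow> real) \<Rightarrow> 'e list set \<Rightarrow> ('e list \<Rightarrow> real) \<Rightarrow> real" where
  "social_cost c P f = (\<Sum>e\<in>UNIV. edge_load P f e * c e (edge_load P f e))"

definition opt_cost :: "('e::finite \<Rightarrow> real \<Rightarrow> real) \<Rightarrow> 'e list set \<Rightarrow> real \<Rightarrow> real" where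
  "opt_cost c P M = Inf (social_cost c P ` feasible_flows P M)"

definition eq_cost :: "('e::finite \<Rightarrow> real \<Rightarrow> real) \<Rightarrow> 'e list set \<Rightarrow> real \<Rightarrow> real" where
  "eq_cost c P M = social_cost c P (SOME f. wardrop_eq c P M f)"

text \<open>Price of anarchy, with the convention PoA = 1 when Opt = 0.\<close>
definition PoA :: "('e::finite \<Rightarrow> real \<Rightarrow> real) \<Rightarrow> 'e list set \<Rightarrow> real \<Rightarrow> real" where
  "PoA c P M = (if opt_cost c P M = 0 then 1 else eq_cost c P M / opt_cost c P M)"

end

theory Submission
  imports Defs "HOL-Real_Asymp.Real_Asymp"
begin

(*
  Let l be the least limit cost, the sum of lim c_e over the edges of a path, taken over
  the paths whose edge costs are bounded. Sending all demand along a path attaining l gives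
  Opt(M) <= l M, and since an equilibrium uses only cheapest paths and that path never
  costs more than l, also Eq(M) <= l M. Conversely, for k < l every path eventually costs
  more than k: a bounded one by the choice of l, any other because one of its edge costs
  grows without bound. So all but a bounded amount of demand pays at least k per unit, and
  Opt(M) >= k (M - C). Hence Opt(M)/M and Eq(M)/M both tend to l, and the PoA to 1.
  Equilibria exist as minimisers of the Beckmann potential over the compact set of
  feasible flows.
*)

lemma integral_increment_bounds:
  fixes g :: "real \<Rightarrow> real"
  assumes cont: "continuous_on {0..} g" and mono: "mono_on {0..} g" and "0 \<le> a" "a \<le> b"
  shows "(b - a) * g a \<le> integral {0..b} g - integral {0..a} g"
    and "integral {0..b} g - integral {0..a} g \<le> (b - a) * g b"
proof -
  have integrable: "g integrable_on {0..b}" "g integrable_on {a..b}"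
    by (intro integrable_continuous_interval continuous_on_subset[OF cont]; use assms in auto)+
  have increment: "integral {0..b} g - integral {0..a} g = integral {a..b} g"
    using Henstock_Kurzweil_Integration.integral_combine[OF assms(3,4) integrable(1)] by simp
  have "integral {a..b} (\<lambda>_. g a) \<le> integral {a..b} g"
    by (rule integral_le[OF integrable_const_ivl integrable(2)])
      (use assms in \<open>auto intro!: mono_onD[OF mono]\<close>)
  then show "(b - a) * g a \<le> integral {0..b} g - integral {0..a} g"
    using assms increment by simp
  have "integral {a..b} g \<le> integral {a..b} (\<lambda>_. g b)"
    by (rule integral_le[OF integrable(2) integrable_const_ivl])
      (use assms in \<open>auto intro!: mono_onD[OF mono]\<close>)
  then show "integral {0..b} g - integral {0..a} g \<le> (b - a) * g b"
    using assms increment by simp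
qed

lemma mono_on_le_tendsto:
  fixes g :: "real \<Rightarrow> real"
  assumes "mono_on {0..} g" "(g \<longlongrightarrow> L) at_top" "0 \<le> x"
  shows "g x \<le> L"
proof (rule tendsto_lowerbound[OF assms(2)])
  show "\<forall>\<^sub>F t in at_top. g x \<le> g t"
    using eventually_ge_at_top[of x] by eventually_elim (use assms in \<open>auto intro: mono_onD\<close>)
qed simp

lemma mono_on_eventually_ge_if_not_convergent:
  fixes g :: "real \<Rightarrow> real"
  assumes mono: "mono_on {0..} g" and divergent: "\<nexists>L. (g \<longlongrightarrow> L) at_top"
  shows "\<forall>\<^sub>F t in at_top. K \<le> g t"
proof (rule ccontr)
  assume "\<not> ?thesis"
  then have "\<exists>s\<ge>t. g s < K" for t
    unfolding eventually_at_top_linorder by (meson not_le)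
  then have bound: "g t < K" if "0 \<le> t" for t
    using mono_onD[OF mono, of t] that by (meson atLeast_iff le_less_trans order_trans)
  have bdd: "bdd_above (g ` {0..})"
    using bound by (auto intro!: bdd_aboveI[of _ K] less_imp_le)
  have "(g \<longlongrightarrow> Sup (g ` {0..})) at_top"
  proof (rule order_tendstoI)
    fix y assume "y < Sup (g ` {0..})"
    then obtain t0 where t0: "t0 \<ge> 0" "y < g t0"
      using less_cSup_iff[OF _ bdd, of y] by auto
    show "\<forall>\<^sub>F t in at_top. y < g t"
      using eventually_ge_at_top[of t0]
      by eventually_elim (use t0 mono_onD[OF mono, of t0] in force)
  next
    fix y assume "Sup (g ` {0..}) < y"
    then have "g t < y" if "0 \<le> t" for t
      using cSup_upper[OF _ bdd, of "g t"] that by fastforce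
    then show "\<forall>\<^sub>F t in at_top. g t < y"
      unfolding eventually_at_top_linorder by blast
  qed
  then show False using divergent by blast
qed

lemma tendsto_div_at_top_if_linear_bounds:
  fixes g :: "real \<Rightarrow> real"
  assumes "0 < l"
    and upper: "\<forall>\<^sub>F M in at_top. g M \<le> l * M"
    and lower: "\<And>k. 0 \<le> k \<Longrightarrow> k < l \<Longrightarrow> \<exists>C. \<forall>\<^sub>F M in at_top. k * (M - C) \<le> g M"
  shows "((\<lambda>M. g M / M) \<longlongrightarrow> l) at_top"
proof (rule order_tendstoI)
  fix a assume "l < a"
  show "\<forall>\<^sub>F M in at_top. g M / M < a"
    using upper eventually_gt_at_top[of 0]
    by eventually_elim
      (use \<open>l < a\<close> in \<open>auto simp: divide_less_eq intro: le_less_trans mult_strict_right_mono\<close>)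
next
  fix a assume "a < l"
  define k where "k = max 0 ((a + l) / 2)"
  have "0 \<le> k" "k < l" "a < k"
    using \<open>0 < l\<close> \<open>a < l\<close> by (auto simp: k_def max_def)
  then obtain C where "\<forall>\<^sub>F M in at_top. k * (M - C) \<le> g M"
    using lower by blast
  moreover have "((\<lambda>M. k * (M - C) / M) \<longlongrightarrow> k) at_top"
    by real_asymp
  then have "\<forall>\<^sub>F M in at_top. a < k * (M - C) / M"
    using \<open>a < k\<close> by (rule order_tendstoD)
  ultimately show "\<forall>\<^sub>F M in at_top. a < g M / M"
    using eventually_gt_at_top[of 0]
    by eventually_elim (metis divide_right_mono less_eq_real_def less_le_trans)
qed

lemma edge_load_nonneg:
  assumes "f \<in> feasible_flows P M"
  shows "0 \<le> edge_load P f e"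
  using assms unfolding edge_load_def feasible_flows_def by (auto intro!: sum_nonneg)

lemma flow_le_edge_load:
  assumes "finite P" "f \<in> feasible_flows P M" "p \<in> P" "e \<in> set p"
  shows "f p \<le> edge_load P f e"
  unfolding edge_load_def
  by (rule member_le_sum) (use assms in \<open>auto simp: feasible_flows_def\<close>)

lemma flow_le_demand:
  assumes "finite P" "f \<in> feasible_flows P M" "p \<in> P"
  shows "f p \<le> M"
  using member_le_sum[of p P f] assms by (auto simp: feasible_flows_def)

lemma edge_load_le_demand:
  assumes "finite P" "f \<in> feasible_flows P M"
  shows "edge_load P f e \<le> M"
  using sum_mono2[of P "{p\<in>P. e \<in> set p}" f] assms
  by (auto simp: edge_load_def feasible_flows_def)

lemma continuous_on_edge_load: "continuous_on UNIV (\<lambda>f. edge_load P f e)"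
  unfolding edge_load_def by (auto intro!: continuous_intros)

lemma feasible_flows_nonempty:
  assumes "finite P" "P \<noteq> {}" "0 \<le> M"
  shows "feasible_flows P M \<noteq> {}"
proof -
  obtain p where "p \<in> P"
    using assms(2) by blast
  then have "(\<lambda>q. if q = p then M else 0) \<in> feasible_flows P M"
    using assms by (auto simp: feasible_flows_def)
  then show ?thesis
    by blast
qed

lemma compact_feasible_flows:
  assumes "finite P"
  shows "compact (feasible_flows P M)"
proof -
  define S where "S p = (if p \<in> P then {0..M} else {0::real})" for p :: "'a list"
  have "compactin (product_topology (\<lambda>_. euclidean) UNIV) (PiE UNIV S)"
    unfolding compactin_PiE by (auto simp: S_def)
  then have box: "compact (PiE UNIV S)"
    by (simp add: euclidean_product_topology)
  have demand: "closed {f::'a list \<Rightarrow> real. (\<Sum>p\<in>P. f p) = M}"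
    by (rule closed_Collect_eq) (auto intro!: continuous_intros)
  have "feasible_flows P M = PiE UNIV S \<inter> {f. (\<Sum>p\<in>P. f p) = M}"
  proof (intro equalityI subsetI)
    fix f assume "f \<in> feasible_flows P M"
    then show "f \<in> PiE UNIV S \<inter> {f. (\<Sum>p\<in>P. f p) = M}"
      using flow_le_demand[OF assms] by (auto simp: feasible_flows_def S_def PiE_UNIV_domain)
  qed (auto simp: feasible_flows_def S_def PiE_UNIV_domain Pi_iff split: if_splits)
  then show ?thesis
    using compact_Int_closed[OF box demand] by simp
qed

lemma social_cost_eq_sum_path_cost:
  assumes "finite P"
  shows "social_cost c P f = (\<Sum>p\<in>P. f p * path_cost c P f p)"
proof -
  have "social_cost c P f = (\<Sum>e\<in>UNIV. \<Sum>p\<in>{p\<in>P. e \<in> set p}. f p * c e (edge_load P f e))"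
    unfolding social_cost_def by (simp add: sum_distrib_right edge_load_def[of P f])
  also have "\<dots> = (\<Sum>p\<in>P. \<Sum>e\<in>{e\<in>UNIV. e \<in> set p}. f p * c e (edge_load P f e))"
    by (rule sum.swap_restrict) (use assms in auto)
  also have "\<dots> = (\<Sum>p\<in>P. f p * path_cost c P f p)"
    unfolding path_cost_def by (simp add: sum_distrib_left)
  finally show ?thesis .
qed

lemma wardrop_social_cost_le:
  assumes "finite P" "wardrop_eq c P M f" "q \<in> P"
  shows "social_cost c P f \<le> M * path_cost c P f q"
proof -
  have feasible: "f \<in> feasible_flows P M"
    using assms(2) by (simp add: wardrop_eq_def)
  have "social_cost c P f = (\<Sum>p\<in>P. f p * path_cost c P f p)"
    using assms(1) by (rule social_cost_eq_sum_path_cost)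
  also have "\<dots> \<le> (\<Sum>p\<in>P. f p * path_cost c P f q)"
  proof (rule sum_mono)
    fix p assume "p \<in> P"
    then have "0 \<le> f p" and "0 < f p \<Longrightarrow> path_cost c P f p \<le> path_cost c P f q"
      using assms feasible by (auto simp: wardrop_eq_def feasible_flows_def)
    then show "f p * path_cost c P f p \<le> f p * path_cost c P f q"
      by (cases "f p = 0") (auto intro: mult_left_mono)
  qed
  also have "\<dots> = M * path_cost c P f q"
    using feasible by (simp add: feasible_flows_def sum_distrib_right[symmetric])
  finally show ?thesis .
qed

locale routing_game =
  fixes P :: "'e::finite list set" and c :: "'e \<Rightarrow> real \<Rightarrow> real"
  assumes finite_paths: "finite P" and paths_nonempty: "P \<noteq> {}"
    and continuous_cost: "\<And>e. continuous_on {0..} (c e)"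
    and mono_cost: "\<And>e. mono_on {0..} (c e)"
    and cost_nonneg: "\<And>e x. 0 \<le> x \<Longrightarrow> 0 \<le> c e x"
begin

definition beckmann_potential :: "('e list \<Rightarrow> real) \<Rightarrow> real" where
  "beckmann_potential f = (\<Sum>e\<in>UNIV. integral {0..edge_load P f e} (c e))"

lemma continuous_on_beckmann_potential:
  "continuous_on (feasible_flows P M) beckmann_potential"
  unfolding beckmann_potential_def
proof (intro continuous_on_sum)
  fix e
  have "continuous_on {0..M} (\<lambda>x. integral {0..x} (c e))"
    by (intro indefinite_integral_continuous_1 integrable_continuous_interval
        continuous_on_subset[OF continuous_cost]) auto
  then show "continuous_on (feasible_flows P M) (\<lambda>f. integral {0..edge_load P f e} (c e))"
    by (rule continuous_on_compose2[OF _ continuous_on_subset[OF continuous_on_edge_load]])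
      (auto intro: edge_load_nonneg edge_load_le_demand[OF finite_paths])
qed

lemma edge_load_shift:
  assumes "p \<in> P" "q \<in> P" "p \<noteq> q"
  shows "edge_load P (f(p := f p - d, q := f q + d)) e =
    edge_load P f e - (if e \<in> set p then d else 0) + (if e \<in> set q then d else 0)"
proof -
  have "f(p := f p - d, q := f q + d) =
      (\<lambda>r. f r - (if r = p then d else 0) + (if r = q then d else 0))"
    using assms(3) by auto
  then show ?thesis
    unfolding edge_load_def using assms finite_paths
    by (simp add: sum.distrib sum_subtractf sum.delta')
qed

lemma shift_feasible:
  assumes "f \<in> feasible_flows P M" "p \<in> P" "q \<in> P" "p \<noteq> q" "0 \<le> d" "d \<le> f p"
  shows "f(p := f p - d, q := f q + d) \<in> feasible_flows P M"
proof -
  have "(\<Sum>r\<in>P. (f(p := f p - d, q := f q + d)) r) = (\<Sum>r\<in>P. f r) - d + d"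
    using assms finite_paths
    by (simp add: sum.remove[of P p] sum.remove[of "P - {p}" q] algebra_simps)
  then show ?thesis
    using assms by (auto simp: feasible_flows_def)
qed

lemma beckmann_potential_shift_le:
  assumes f: "f \<in> feasible_flows P M" and pq: "p \<in> P" "q \<in> P" "p \<noteq> q"
    and d: "0 \<le> d" "d \<le> f p"
  defines "x \<equiv> edge_load P f"
  shows "beckmann_potential (f(p := f p - d, q := f q + d)) - beckmann_potential f \<le>
    d * ((\<Sum>e\<in>set q - set p. c e (x e + d)) - (\<Sum>e\<in>set p - set q. c e (x e - d)))"
proof -
  let ?F = "\<lambda>e y. integral {0..y} (c e)"
  let ?x' = "edge_load P (f(p := f p - d, q := f q + d))"
  have x_nonneg: "0 \<le> x e" for e
    unfolding x_def using f by (rule edge_load_nonneg)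
  have x_ge: "d \<le> x e" if "e \<in> set p" for e
    using flow_le_edge_load[OF finite_paths f pq(1) that] d unfolding x_def by simp
  have x': "?x' e = x e - (if e \<in> set p then d else 0) + (if e \<in> set q then d else 0)" for e
    unfolding x_def using pq by (rule edge_load_shift)
  have edgewise: "?F e (?x' e) - ?F e (x e) \<le>
      (if e \<in> set q - set p then d * c e (x e + d) else 0) -
      (if e \<in> set p - set q then d * c e (x e - d) else 0)" for e
  proof -
    consider "e \<in> set q - set p" | "e \<in> set p - set q" | "e \<in> set p \<longleftrightarrow> e \<in> set q"
      by blast
    then show ?thesis
    proof cases
      case 1
      then show ?thesis
        using integral_increment_bounds(2)[OF continuous_cost[of e] mono_cost[of e],
            of "x e" "x e + d"]
          x_nonneg[of e] d x'[of e] by simp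
    next
      case 2
      then show ?thesis
        using integral_increment_bounds(1)[OF continuous_cost[of e] mono_cost[of e],
            of "x e - d" "x e"]
          d x_ge[of e] x'[of e] by simp
    qed (use x' in auto)
  qed
  have "beckmann_potential (f(p := f p - d, q := f q + d)) - beckmann_potential f =
      (\<Sum>e\<in>UNIV. ?F e (?x' e) - ?F e (x e))"
    by (simp add: beckmann_potential_def x_def sum_subtractf)
  also have "\<dots> \<le> (\<Sum>e\<in>UNIV. (if e \<in> set q - set p then d * c e (x e + d) else 0) -
      (if e \<in> set p - set q then d * c e (x e - d) else 0))"
    by (rule sum_mono) (rule edgewise)
  also have "\<dots> = d * ((\<Sum>e\<in>set q - set p. c e (x e + d)) - (\<Sum>e\<in>set p - set q. c e (x e - d)))"
    by (simp add: sum_subtractf sum.If_cases sum_distrib_left right_diff_distrib flip: set_diff_eq)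
  finally show ?thesis .
qed

lemma beckmann_minimizer_is_wardrop:
  assumes f: "f \<in> feasible_flows P M"
    and minimal: "\<And>g. g \<in> feasible_flows P M \<Longrightarrow> beckmann_potential f \<le> beckmann_potential g"
  shows "wardrop_eq c P M f"
proof -
  define x where "x = edge_load P f"
  have "path_cost c P f p \<le> path_cost c P f q" if pq: "p \<in> P" "q \<in> P" and used: "0 < f p" for p q
  proof (rule ccontr)
    assume "\<not> ?thesis"
    then have "p \<noteq> q" and cheaper: "path_cost c P f q < path_cost c P f p"
      by auto
    \<comment> \<open>by \<open>beckmann_potential_shift_le\<close>, moving \<open>d\<close> units of flow from \<open>p\<close> to \<open>q\<close>
      changes the potential by at most \<open>d * h d\<close>, and \<open>h 0 < 0\<close>\<close>
    define h where "h d = (\<Sum>e\<in>set q - set p. c e (x e + d)) - (\<Sum>e\<in>set p - set q. c e (x e - d))"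
      for d
    have "h 0 = path_cost c P f q - path_cost c P f p"
      unfolding h_def path_cost_def
      using sum.Int_Diff[of "set q" "\<lambda>e. c e (x e)" "set p"]
        sum.Int_Diff[of "set p" "\<lambda>e. c e (x e)" "set q"]
      by (simp add: x_def Int_commute)
    then have "h 0 < 0"
      using cheaper by simp
    have "continuous_on {0..f p} h"
      unfolding h_def
    proof (intro continuous_intros continuous_on_compose2[OF continuous_cost])
      show "(\<lambda>d. x e + d) ` {0..f p} \<subseteq> {0..}" for e
        using edge_load_nonneg[OF f] by (auto simp: x_def)
      show "(\<lambda>d. x e - d) ` {0..f p} \<subseteq> {0..}" if "e \<in> set p - set q" for e
        using flow_le_edge_load[OF finite_paths f pq(1)] that by (force simp: x_def)
    qed
    then have "(h \<longlongrightarrow> h 0) (at_right 0)"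
      using used by (simp add: continuous_on_Icc_at_rightD)
    from order_tendstoD(2)[OF this \<open>h 0 < 0\<close>]
    have "\<forall>\<^sub>F d in at_right 0. h d < 0" .
    moreover have "\<forall>\<^sub>F d in at_right 0. 0 < d \<and> d \<le> f p"
      using used by (auto simp: eventually_at_right_field intro!: exI[of _ "f p"])
    ultimately have "\<forall>\<^sub>F d in at_right 0. h d < 0 \<and> 0 < d \<and> d \<le> f p"
      by eventually_elim simp
    then obtain d where "h d < 0" "0 < d" "d \<le> f p"
      using eventually_happens'[OF trivial_limit_at_right_real] by blast
    have "beckmann_potential (f(p := f p - d, q := f q + d)) - beckmann_potential f \<le> d * h d"
      using beckmann_potential_shift_le[OF f pq \<open>p \<noteq> q\<close>, of d] \<open>0 < d\<close> \<open>d \<le> f p\<close>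
      by (simp add: h_def x_def)
    also have "d * h d < 0"
      using \<open>0 < d\<close> \<open>h d < 0\<close> by (rule mult_pos_neg)
    finally show False
      using minimal[OF shift_feasible[OF f pq \<open>p \<noteq> q\<close> less_imp_le[OF \<open>0 < d\<close>] \<open>d \<le> f p\<close>]]
      by linarith
  qed
  then show ?thesis
    using f by (simp add: wardrop_eq_def)
qed

lemma wardrop_eq_exists:
  assumes "0 \<le> M"
  obtains f where "wardrop_eq c P M f"
proof -
  obtain f where "f \<in> feasible_flows P M"
    and "\<And>g. g \<in> feasible_flows P M \<Longrightarrow> beckmann_potential f \<le> beckmann_potential g"
    using continuous_attains_inf[OF compact_feasible_flows[OF finite_paths]
        feasible_flows_nonempty[OF finite_paths paths_nonempty assms]
        continuous_on_beckmann_potential] by blast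
  then show ?thesis
    using beckmann_minimizer_is_wardrop that by blast
qed

lemma path_cost_nonneg:
  assumes "f \<in> feasible_flows P M"
  shows "0 \<le> path_cost c P f p"
  unfolding path_cost_def using assms by (auto intro!: sum_nonneg cost_nonneg edge_load_nonneg)

lemma social_cost_nonneg:
  assumes "f \<in> feasible_flows P M"
  shows "0 \<le> social_cost c P f"
  unfolding social_cost_def using assms
  by (auto intro!: sum_nonneg mult_nonneg_nonneg cost_nonneg edge_load_nonneg)

lemma opt_cost_le_social_cost:
  assumes "f \<in> feasible_flows P M"
  shows "opt_cost c P M \<le> social_cost c P f"
  unfolding opt_cost_def using assms social_cost_nonneg
  by (auto intro!: cInf_lower bdd_belowI[of _ 0])

lemma opt_cost_greatest:
  assumes "0 \<le> M" and "\<And>f. f \<in> feasible_flows P M \<Longrightarrow> b \<le> social_cost c P f"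
  shows "b \<le> opt_cost c P M"
  unfolding opt_cost_def
  using feasible_flows_nonempty[OF finite_paths paths_nonempty assms(1)] assms(2)
  by (auto intro!: cInf_greatest)

lemma opt_cost_nonneg: "0 \<le> M \<Longrightarrow> 0 \<le> opt_cost c P M"
  using opt_cost_greatest social_cost_nonneg by blast

lemma wardrop_eq_SOME:
  assumes "0 \<le> M"
  shows "wardrop_eq c P M (SOME f. wardrop_eq c P M f)"
  using wardrop_eq_exists[OF assms] by (metis someI)

lemma opt_cost_le_eq_cost:
  assumes "0 \<le> M"
  shows "opt_cost c P M \<le> eq_cost c P M"
  using wardrop_eq_SOME[OF assms] unfolding eq_cost_def wardrop_eq_def
  by (auto intro: opt_cost_le_social_cost)

lemma social_cost_ge_if_path_costs_ge:
  fixes k T :: real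
  assumes f: "f \<in> feasible_flows P M" and "0 \<le> k" "0 \<le> T"
    and large: "\<And>p t. p \<in> P \<Longrightarrow> T \<le> t \<Longrightarrow> k \<le> (\<Sum>e\<in>set p. c e t)"
  shows "k * (M - card P * T) \<le> social_cost c P f"
proof -
  have "k * (M - card P * T) = (\<Sum>p\<in>P. k * (f p - T))"
    using f
    by (simp add: feasible_flows_def sum_subtractf right_diff_distrib flip: sum_distrib_left)
  also have "\<dots> \<le> (\<Sum>p\<in>P. f p * path_cost c P f p)"
  proof (rule sum_mono)
    fix p assume "p \<in> P"
    have "0 \<le> f p"
      using f \<open>p \<in> P\<close> by (auto simp: feasible_flows_def)
    show "k * (f p - T) \<le> f p * path_cost c P f p"
    proof (cases "T \<le> f p")
      case True
      have "k \<le> (\<Sum>e\<in>set p. c e (f p))"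
        using large[OF \<open>p \<in> P\<close> True] .
      also have "\<dots> \<le> path_cost c P f p"
        unfolding path_cost_def
        using \<open>0 \<le> f p\<close> flow_le_edge_load[OF finite_paths f \<open>p \<in> P\<close>] edge_load_nonneg[OF f]
        by (intro sum_mono mono_onD[OF mono_cost]) auto
      finally have "k * f p \<le> f p * path_cost c P f p"
        using \<open>0 \<le> f p\<close> by (metis mult.commute mult_right_mono)
      moreover have "k * (f p - T) \<le> k * f p"
        using \<open>0 \<le> k\<close> \<open>0 \<le> T\<close> by (simp add: mult_left_mono)
      ultimately show ?thesis
        by linarith
    next
      case False
      then have "k * (f p - T) \<le> 0"
        using \<open>0 \<le> k\<close> by (simp add: mult_nonneg_nonpos)
      also have "0 \<le> f p * path_cost c P f p"
        using \<open>0 \<le> f p\<close> path_cost_nonneg[OF f] by simp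
      finally show ?thesis .
    qed
  qed
  also have "\<dots> = social_cost c P f"
    using finite_paths by (simp add: social_cost_eq_sum_path_cost)
  finally show ?thesis .
qed


definition bounded_paths :: "'e list set" where
  "bounded_paths = {p \<in> P. \<forall>e\<in>set p. \<exists>L. (c e \<longlongrightarrow> L) at_top}"

definition limit_cost :: "'e list \<Rightarrow> real" where
  "limit_cost p = (\<Sum>e\<in>set p. Lim at_top (c e))"

definition min_limit_cost :: real where
  "min_limit_cost = Min (limit_cost ` bounded_paths)"

lemma tendsto_Lim_cost:
  assumes "p \<in> bounded_paths" "e \<in> set p"
  shows "(c e \<longlongrightarrow> Lim at_top (c e)) at_top"
proof -
  obtain L where "(c e \<longlongrightarrow> L) at_top"
    using assms by (auto simp: bounded_paths_def)
  then show ?thesis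
    by (simp add: tendsto_Lim)
qed

lemma tendsto_cost_sum_limit_cost:
  assumes "p \<in> bounded_paths"
  shows "((\<lambda>t. \<Sum>e\<in>set p. c e t) \<longlongrightarrow> limit_cost p) at_top"
  unfolding limit_cost_def
  using assms by (auto intro!: tendsto_sum tendsto_Lim_cost)

lemma path_cost_le_limit_cost:
  assumes "p \<in> bounded_paths" "f \<in> feasible_flows P M"
  shows "path_cost c P f p \<le> limit_cost p"
  unfolding path_cost_def limit_cost_def using assms
  by (auto intro!: sum_mono mono_on_le_tendsto[OF mono_cost] tendsto_Lim_cost edge_load_nonneg)

lemma min_limit_cost_le: "p \<in> bounded_paths \<Longrightarrow> min_limit_cost \<le> limit_cost p"
  unfolding min_limit_cost_def using finite_paths by (auto simp: bounded_paths_def)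

lemma eventually_cost_sum_gt:
  assumes "p \<in> P" "k < min_limit_cost"
  shows "\<forall>\<^sub>F t in at_top. k < (\<Sum>e\<in>set p. c e t)"
proof (cases "p \<in> bounded_paths")
  case True
  then show ?thesis
    using assms(2) min_limit_cost_le
    by (intro order_tendstoD(1)[OF tendsto_cost_sum_limit_cost]) fastforce+
next
  case False
  then obtain e where "e \<in> set p" and "\<nexists>L. (c e \<longlongrightarrow> L) at_top"
    using assms(1) by (auto simp: bounded_paths_def)
  from mono_on_eventually_ge_if_not_convergent[OF mono_cost this(2), of "k + 1"]
  show ?thesis
    using eventually_ge_at_top[of 0]
  proof eventually_elim
    case (elim t)
    have "c e t \<le> (\<Sum>e\<in>set p. c e t)"
      using \<open>e \<in> set p\<close> elim by (intro member_le_sum cost_nonneg) auto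
    then show ?case
      using elim by simp
  qed
qed

lemma opt_cost_ge_linear:
  assumes "0 \<le> k" "k < min_limit_cost"
  obtains C where "\<And>M. 0 \<le> M \<Longrightarrow> k * (M - C) \<le> opt_cost c P M"
proof -
  have "\<forall>\<^sub>F t in at_top. \<forall>p\<in>P. k < (\<Sum>e\<in>set p. c e t)"
    using eventually_cost_sum_gt[OF _ assms(2)]
    by (intro eventually_ball_finite[OF finite_paths]) auto
  then obtain T where T: "\<And>t p. T \<le> t \<Longrightarrow> p \<in> P \<Longrightarrow> k < (\<Sum>e\<in>set p. c e t)"
    unfolding eventually_at_top_linorder by blast
  have "k * (M - card P * max T 0) \<le> opt_cost c P M" if "0 \<le> M" for M
    using social_cost_ge_if_path_costs_ge[OF _ assms(1), of _ M "max T 0"] T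
    by (intro opt_cost_greatest[OF that]) (auto intro: less_imp_le)
  then show ?thesis
    using that by blast
qed

end

locale routing_game_with_bounded_path = routing_game +
  assumes bounded_path_exists: "bounded_paths \<noteq> {}"
begin

lemma min_limit_cost_attained:
  obtains p where "p \<in> bounded_paths" "limit_cost p = min_limit_cost"
proof -
  have "finite bounded_paths"
    using finite_paths by (simp add: bounded_paths_def)
  then have "min_limit_cost \<in> limit_cost ` bounded_paths"
    unfolding min_limit_cost_def using bounded_path_exists by (intro Min_in) auto
  then show ?thesis
    using that by (metis imageE)
qed

lemma min_limit_cost_nonneg: "0 \<le> min_limit_cost"
proof -
  obtain p where p: "p \<in> bounded_paths" "limit_cost p = min_limit_cost"
    by (rule min_limit_cost_attained)
  have "(\<lambda>t. \<Sum>e\<in>set p. c e t) t \<ge> 0" if "0 \<le> t" for t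
    using that by (auto intro!: sum_nonneg cost_nonneg)
  then have "0 \<le> limit_cost p"
    by (intro tendsto_lowerbound[OF tendsto_cost_sum_limit_cost[OF p(1)]])
      (auto intro: eventually_mono[OF eventually_ge_at_top[of 0]])
  then show ?thesis
    using p by simp
qed

lemma eq_cost_le_linear:
  assumes "0 \<le> M"
  shows "eq_cost c P M \<le> M * min_limit_cost"
proof -
  obtain p where p: "p \<in> bounded_paths" "limit_cost p = min_limit_cost"
    by (rule min_limit_cost_attained)
  define f where "f = (SOME f. wardrop_eq c P M f)"
  have "wardrop_eq c P M f"
    unfolding f_def using assms by (rule wardrop_eq_SOME)
  moreover have "p \<in> P"
    using p(1) by (simp add: bounded_paths_def)
  ultimately have "eq_cost c P M \<le> M * path_cost c P f p"
    unfolding eq_cost_def f_def[symmetric] by (rule wardrop_social_cost_le[OF finite_paths])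
  also have "\<dots> \<le> M * min_limit_cost"
    using path_cost_le_limit_cost[OF p(1)] \<open>wardrop_eq c P M f\<close> assms p(2)
    by (auto simp: wardrop_eq_def intro: mult_left_mono)
  finally show ?thesis .
qed

lemma opt_cost_div_demand_tendsto:
  assumes "0 < min_limit_cost"
  shows "((\<lambda>M. opt_cost c P M / M) \<longlongrightarrow> min_limit_cost) at_top"
proof (rule tendsto_div_at_top_if_linear_bounds[OF assms])
  show "\<forall>\<^sub>F M in at_top. opt_cost c P M \<le> min_limit_cost * M"
    using eventually_ge_at_top[of 0]
    by eventually_elim (metis opt_cost_le_eq_cost eq_cost_le_linear mult.commute order_trans)
  show "\<exists>C. \<forall>\<^sub>F M in at_top. k * (M - C) \<le> opt_cost c P M"
    if k: "0 \<le> k" "k < min_limit_cost" for k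
  proof -
    obtain C where "\<And>M. 0 \<le> M \<Longrightarrow> k * (M - C) \<le> opt_cost c P M"
      using opt_cost_ge_linear[OF k] by blast
    then show ?thesis
      using eventually_ge_at_top[of 0] by (blast intro: eventually_mono)
  qed
qed

theorem PoA_tendsto_1: "(PoA c P \<longlongrightarrow> 1) at_top"
proof (cases "min_limit_cost = 0")
  case True
  have opt_zero: "opt_cost c P M = 0" if "0 \<le> M" for M
    using opt_cost_nonneg[OF that] opt_cost_le_eq_cost[OF that] eq_cost_le_linear[OF that] True
    by simp
  have "\<forall>\<^sub>F M in at_top. PoA c P M = 1"
    using eventually_ge_at_top[of 0] by eventually_elim (simp add: PoA_def opt_zero)
  then show ?thesis
    by (rule tendsto_eventually)
next
  case False
  then have pos: "0 < min_limit_cost"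
    using min_limit_cost_nonneg by simp
  note opt = opt_cost_div_demand_tendsto[OF pos]
  have eq: "((\<lambda>M. eq_cost c P M / M) \<longlongrightarrow> min_limit_cost) at_top"
  proof (rule tendsto_sandwich[OF _ _ opt tendsto_const])
    show "\<forall>\<^sub>F M in at_top. opt_cost c P M / M \<le> eq_cost c P M / M"
      using eventually_gt_at_top[of 0]
      by eventually_elim (simp add: divide_right_mono opt_cost_le_eq_cost)
    show "\<forall>\<^sub>F M in at_top. eq_cost c P M / M \<le> min_limit_cost"
      using eventually_gt_at_top[of 0]
      by eventually_elim (simp add: divide_le_eq mult.commute eq_cost_le_linear)
  qed
  have "((\<lambda>M. (eq_cost c P M / M) / (opt_cost c P M / M)) \<longlongrightarrow> 1) at_top"
    using tendsto_divide[OF eq opt] pos by simp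
  moreover have "\<forall>\<^sub>F M in at_top. (eq_cost c P M / M) / (opt_cost c P M / M) = PoA c P M"
    using order_tendstoD(1)[OF opt pos] eventually_gt_at_top[of 0]
    by eventually_elim (auto simp: PoA_def)
  ultimately show ?thesis
    by (rule Lim_transform_eventually)
qed

end

theorem corollary4p7:
  fixes tl_of hd_of :: "'e::finite \<Rightarrow> 'v"
    and orig dest :: 'v
    and P :: "'e list set"
    and c :: "'e \<Rightarrow> real \<Rightarrow> real"
  assumes "finite P" and "P \<noteq> {}"
    and "\<forall>p\<in>P. is_od_path tl_of hd_of orig dest p"
    and "\<And>e. continuous_on {0..} (c e)"
    and "\<And>e. mono_on {0..} (c e)"
    and "\<And>e x. 0 \<le> x \<Longrightarrow> 0 \<le> c e x"
    and "\<exists>p\<in>P. \<forall>e\<in>set p. \<exists>L. (c e \<longlongrightarrow> L) at_top"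
  shows "(PoA c P \<longlongrightarrow> 1) at_top"
proof -
  \<comment> \<open>the path structure is irrelevant: the argument works for any finite set of paths\<close>
  interpret routing_game P c
    using assms(1,2,4-6) by unfold_locales
  interpret routing_game_with_bounded_path P c
    using assms(7) by unfold_locales (auto simp: bounded_paths_def)
  show ?thesis
    by (rule PoA_tendsto_1)
qed

end
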